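(* Let $r\ge 2$ and let $\psi\in C^\infty(\mathbb{R})$ with $\psi''>0$ everywhere. Let $\mathcal{M}_{3,r,\psi}=(\mathbb{R}^{2r+2},g_{3,r,\psi})$, where on $\mathbb{R}^{2r+2}$ with coordinates $(u_1,\dots,u_r,v_1,\dots,v_r,x,y)$ the metric $g_{3,r,\psi}$ has as its only non-zero components (up to symmetry) $g(\partial_x,\partial_y)=1$, $g(\partial_{u_i},\partial_{v_j})=\delta_{ij}$, and $g(\partial_x,\partial_x)=-2u_1v_2-\dots-2u_{r-1}v_r-2\psi(u_r)$. Then $\mathcal{M}_{3,r,\psi}$ is Osserman nilpotent of order $2r$: for every tangent vector $\xi$ the Jacobi operator satisfies $J(\xi)^{2r}=0$, and there exist a point $P_0$ and $\xi_0\in T_{P_0}\mathbb{R}^{2r+2}$ with $J(\xi_0)^{2r-1}\neq 0$.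
   Context: The curvature tensor is $R(a,b,c,d)=g\big((\nabla_a\nabla_b-\nabla_b\nabla_a-\nabla_{[a,b]})c,d\big)$. For a tangent vector $\xi$ at $P$, the Jacobi operator $J(\xi)$ is the linear endomorphism of $T_PM$ characterized by $g(J(\xi)y,z)=R(y,\xi,\xi,z)$ for all $y,z\in T_PM$. *)

theory Defs
  imports "HOL-Analysis.Analysis" "Jordan_Normal_Form.Matrix"
begin

text \<open>Points of R^n are coordinate functions nat => real (only indices < n matter).
  A (pseudo-Riemannian) metric on R^n is given by its components g i j P = g(d_i,d_j) at P.\<close>

type_synonym point = "nat \<Rightarrow> real"
type_synonym metric = "nat \<Rightarrow> nat \<Rightarrow> point \<Rightarrow> real"

definition pd :: "nat \<Rightarrow> (point \<Rightarrow> real) \<Rightarrow> point \<Rightarrow> real" where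
  "pd k f P = deriv (\<lambda>t. f (P(k := t))) (P k)"

definition metric_mat :: "nat \<Rightarrow> metric \<Rightarrow> point \<Rightarrow> real mat" where
  "metric_mat n g P = mat n n (\<lambda>(i,j). g i j P)"

definition inv_metric :: "nat \<Rightarrow> metric \<Rightarrow> metric" where
  "inv_metric n g = (\<lambda>i j P. (THE B. B \<in> carrier_mat n n \<and> metric_mat n g P * B = 1\<^sub>m n) $$ (i,j))"

text \<open>Christoffel symbols Gamma^l_{ij} of the Levi-Civita connection: nabla_{d_i} d_j = sum_l Gamma^l_{ij} d_l.\<close>
definition christoffel :: "nat \<Rightarrow> metric \<Rightarrow> nat \<Rightarrow> nat \<Rightarrow> nat \<Rightarrow> point \<Rightarrow> real" where
  "christoffel n g l i j P = (1/2) * (\<Sum>m<n. inv_metric n g l m P *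
      (pd i (g j m) P + pd j (g i m) P - pd m (g i j) P))"

text \<open>R(d_i,d_j)d_k = (nabla_i nabla_j - nabla_j nabla_i) d_k = sum_m riem_up m i j k * d_m.\<close>
definition riem_up :: "nat \<Rightarrow> metric \<Rightarrow> nat \<Rightarrow> nat \<Rightarrow> nat \<Rightarrow> nat \<Rightarrow> point \<Rightarrow> real" where
  "riem_up n g m i j k P =
     pd i (christoffel n g m j k) P - pd j (christoffel n g m i k) P
     + (\<Sum>l<n. christoffel n g l j k P * christoffel n g m i l P
              - christoffel n g l i k P * christoffel n g m j l P)"

text \<open>R(a,b,c,d) = g((nabla_a nabla_b - nabla_b nabla_a - nabla_{[a,b]}) c, d), extended multilinearly.\<close>
definition curv :: "nat \<Rightarrow> metric \<Rightarrow> point \<Rightarrow> real vec \<Rightarrow> real vec \<Rightarrow> real vec \<Rightarrow> real vec \<Rightarrow> real" where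
  "curv n g P a b c d = (\<Sum>i<n. \<Sum>j<n. \<Sum>k<n. \<Sum>h<n. \<Sum>m<n.
      a$i * b$j * c$k * d$h * riem_up n g m i j k P * g m h P)"

definition gform :: "nat \<Rightarrow> metric \<Rightarrow> point \<Rightarrow> real vec \<Rightarrow> real vec \<Rightarrow> real" where
  "gform n g P y z = (\<Sum>i<n. \<Sum>j<n. y$i * z$j * g i j P)"

definition jacobi :: "nat \<Rightarrow> metric \<Rightarrow> point \<Rightarrow> real vec \<Rightarrow> real mat" where
  "jacobi n g P \<xi> = (THE A. A \<in> carrier_mat n n \<and>
      (\<forall>y \<in> carrier_vec n. \<forall>z \<in> carrier_vec n. gform n g P (A *\<^sub>v y) z = curv n g P y \<xi> \<xi> z))"

text \<open>The metric g_{3,r,psi} on R^{2r+2}, coordinates (u_1..u_r, v_1..v_r, x, y) at indices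
  u_i = i-1, v_j = r+j-1, x = 2r, y = 2r+1.\<close>
definition g3 :: "nat \<Rightarrow> (real \<Rightarrow> real) \<Rightarrow> metric" where
  "g3 r \<psi> i j P =
     (if (i = 2*r \<and> j = 2*r+1) \<or> (i = 2*r+1 \<and> j = 2*r) then 1
      else if (i < r \<and> j = r + i) \<or> (j < r \<and> i = r + j) then 1
      else if i = 2*r \<and> j = 2*r then
        - 2 * (\<Sum>k<r-1. P k * P (r + k + 1)) - 2 * \<psi> (P (r-1))
      else 0)"

end

(*
  g3 r psi is the Walker metric 2 dx dy + 2 sum_i du_i dv_i + F dx^2 with potential
  F = -2 (u_1 v_2 + ... + u_(r-1) v_r) - 2 psi(u_r), which does not depend on x and y.
  For such a metric the Christoffel symbols are first derivatives of F, their quadratic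
  terms cancel, and with H the Hessian of F
    R(y,a,b,z) = 1/2 (a_x z_x H(y,b) - y_x z_x H(a,b) - a_x b_x H(y,z) + y_x b_x H(a,z)).
  So J(xi) y has no x-component, and with w = xi_x y - y_x xi its (u,v)-part is
  -1/2 xi_x H(w,.) transported by the pairing u_i <-> v_i, its y-component 1/2 H(w,xi).
  The Hessian of F links each coordinate of the chain u_1, ..., u_r, v_r, ..., v_1 only to
  the next one (the link u_r -> v_r carries psi''), so J(xi) raises the filtration by chain
  position and J(xi)^(2r) = 0, while for xi = d/dx and psi'' <> 0 the power J^(2r-1) maps
  d/du_1 to a nonzero multiple of d/dv_1.
*)

theory Submission
  imports Defs "Jordan_Normal_Form.Determinant"
begin

no_notation vec_nth (infixl \<open>$\<close> 90)

lemma pd_eqI: "((\<lambda>t. f (P(k := t))) has_real_derivative D) (at (P k)) \<Longrightarrow> pd k f P = D"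
  unfolding pd_def by (rule DERIV_imp_deriv)

lemma pd_const [simp]: "pd k (\<lambda>P. c) P = 0"
  unfolding pd_def by simp

lemma has_real_derivative_fun_upd:
  "((\<lambda>t. (P(k := t)) j) has_real_derivative of_bool (j = k)) (at s)"
  by (cases "j = k") auto

lemma mult_unit_vec_index:
  "(A :: 'a :: semiring_1 mat) \<in> carrier_mat n m \<Longrightarrow> i < n \<Longrightarrow> j < m \<Longrightarrow> (A *\<^sub>v unit_vec m j) $ i = A $$ (i, j)"
  by (simp add: row_def)

lemma mat_eq_by_mult_vecI:
  assumes "(A :: 'a :: semiring_1 mat) \<in> carrier_mat n m" "B \<in> carrier_mat n m"
    and "\<And>y. y \<in> carrier_vec m \<Longrightarrow> A *\<^sub>v y = B *\<^sub>v y"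
  shows "A = B"
proof (rule eq_matI)
  fix i j assume "i < dim_row B" "j < dim_col B"
  then show "A $$ (i, j) = B $$ (i, j)"
    using assms mult_unit_vec_index[of A n m i j] mult_unit_vec_index[of B n m i j] by force
qed (use assms in auto)

lemma pow_mat_Suc_mult_vec:
  "A \<in> carrier_mat n n \<Longrightarrow> y \<in> carrier_vec n \<Longrightarrow> A ^\<^sub>m Suc k *\<^sub>v y = A ^\<^sub>m k *\<^sub>v (A *\<^sub>v y)"
  by (simp add: assoc_mult_mat_vec[of _ n n _ n])

lemma inv_metric_eqI:
  assumes B: "B \<in> carrier_mat n n" and MB: "metric_mat n g P * B = 1\<^sub>m n"
  shows "inv_metric n g i j P = B $$ (i, j)"
proof -
  let ?M = "metric_mat n g P"
  have M: "?M \<in> carrier_mat n n" by (simp add: metric_mat_def)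
  have BM: "B * ?M = 1\<^sub>m n" by (rule mat_mult_left_right_inverse[OF M B MB])
  have "(THE B'. B' \<in> carrier_mat n n \<and> ?M * B' = 1\<^sub>m n) = B"
  proof (rule the_equality)
    fix B' assume "B' \<in> carrier_mat n n \<and> ?M * B' = 1\<^sub>m n"
    then have B': "B' \<in> carrier_mat n n" and MB': "?M * B' = 1\<^sub>m n" by auto
    have "B' = (B * ?M) * B'" using BM B' by simp
    also have "\<dots> = B * (?M * B')" using B M B' by (simp add: assoc_mult_mat[of _ n n _ n _ n])
    finally show "B' = B" using B MB' by simp
  qed (use B MB in simp)
  then show ?thesis unfolding inv_metric_def by simp
qed

lemma gform_eq_scalar_prod:
  assumes "y \<in> carrier_vec n" "z \<in> carrier_vec n"
  shows "gform n g P y z = y \<bullet> (metric_mat n g P *\<^sub>v z)"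
  using assms
  by (simp add: gform_def scalar_prod_def metric_mat_def row_def sum_distrib_left
      lessThan_atLeast0 ac_simps)

lemma gform_nondegenerate:
  assumes B: "B \<in> carrier_mat n n" and MB: "metric_mat n g P * B = 1\<^sub>m n"
    and u: "u \<in> carrier_vec n" and v: "v \<in> carrier_vec n"
    and eq: "\<And>z. z \<in> carrier_vec n \<Longrightarrow> gform n g P u z = gform n g P v z"
  shows "u = v"
proof (rule eq_vecI)
  fix j assume "j < dim_vec v"
  then have j: "j < n" using v by simp
  let ?z = "B *\<^sub>v unit_vec n j"
  have M: "metric_mat n g P \<in> carrier_mat n n" by (simp add: metric_mat_def)
  have Mz: "metric_mat n g P *\<^sub>v ?z = unit_vec n j"
    using B M by (simp add: assoc_mult_mat_vec[symmetric, of _ n n _ n] MB)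
  have z: "?z \<in> carrier_vec n" using B by simp
  have "u $ j = gform n g P u ?z"
    using gform_eq_scalar_prod[OF u z] Mz j by simp
  also have "\<dots> = gform n g P v ?z" by (rule eq[OF z])
  also have "\<dots> = v $ j"
    using gform_eq_scalar_prod[OF v z] Mz j by simp
  finally show "u $ j = v $ j" .
qed (use u v in simp)

lemma jacobi_eqI:
  assumes B: "B \<in> carrier_mat n n" and MB: "metric_mat n g P * B = 1\<^sub>m n"
    and A: "A \<in> carrier_mat n n"
    and curv: "\<And>y z. y \<in> carrier_vec n \<Longrightarrow> z \<in> carrier_vec n \<Longrightarrow>
      gform n g P (A *\<^sub>v y) z = curv n g P y \<xi> \<xi> z"
  shows "jacobi n g P \<xi> = A"
  unfolding jacobi_def
proof (rule the_equality)
  fix A' assume A': "A' \<in> carrier_mat n n \<and>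
    (\<forall>y \<in> carrier_vec n. \<forall>z \<in> carrier_vec n. gform n g P (A' *\<^sub>v y) z = curv n g P y \<xi> \<xi> z)"
  show "A' = A"
  proof (rule mat_eq_by_mult_vecI)
    fix y :: "real vec" assume y: "y \<in> carrier_vec n"
    show "A' *\<^sub>v y = A *\<^sub>v y"
      by (rule gform_nondegenerate[OF B MB]) (use A A' y curv in auto)
  qed (use A A' in auto)
qed (use A curv in auto)

section \<open>Walker metrics\<close>

definition partner :: "nat \<Rightarrow> nat \<Rightarrow> nat" where
  "partner r i = (if i < r then r + i else if i < 2*r then i - r else if i = 2*r then 2*r + 1 else 2*r)"

lemma partner_lt: "i < 2*r+2 \<Longrightarrow> partner r i < 2*r+2"
  by (auto simp: partner_def)

lemma partner_partner: "i < 2*r+2 \<Longrightarrow> partner r (partner r i) = i"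
  by (auto simp: partner_def)

lemma partner_eq_iff: "i < 2*r+2 \<Longrightarrow> j < 2*r+2 \<Longrightarrow> j = partner r i \<longleftrightarrow> i = partner r j"
  by (auto simp: partner_def)

lemma partner_eq_x_iff: "i < 2*r+2 \<Longrightarrow> partner r i = 2*r \<longleftrightarrow> i = 2*r+1"
  by (auto simp: partner_def)

lemma partner_eq_y_iff: "i < 2*r+2 \<Longrightarrow> partner r i = 2*r+1 \<longleftrightarrow> i = 2*r"
  by (auto simp: partner_def)

lemma partner_x [simp]: "partner r (2*r) = 2*r+1"
  by (simp add: partner_def)

(* 2 dx dy + 2 sum_i du_i dv_i + F dx^2 in the coordinates of g3 *)
definition walker_metric :: "nat \<Rightarrow> (point \<Rightarrow> real) \<Rightarrow> metric" where
  "walker_metric r F i j P =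
     (if (i = 2*r \<and> j = 2*r+1) \<or> (i = 2*r+1 \<and> j = 2*r) then 1
      else if (i < r \<and> j = r + i) \<or> (j < r \<and> i = r + j) then 1
      else if i = 2*r \<and> j = 2*r then F P else 0)"

lemma walker_metric_partner:
  "i < 2*r+2 \<Longrightarrow> j < 2*r+2 \<Longrightarrow>
    walker_metric r F i j P = of_bool (j = partner r i) + of_bool (i = 2*r \<and> j = 2*r) * F P"
  by (auto simp: walker_metric_def partner_def)

lemma pd_walker_metric:
  "pd k (walker_metric r F i j) P = of_bool (i = 2*r \<and> j = 2*r) * pd k F P"
proof (cases "i = 2*r \<and> j = 2*r")
  case True
  then have "walker_metric r F i j = F" by (simp add: fun_eq_iff walker_metric_def)
  then show ?thesis using True by simp
next
  case False
  then have "walker_metric r F i j = (\<lambda>P. walker_metric r F i j (\<lambda>_. 0))"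
    by (auto simp: fun_eq_iff walker_metric_def)
  then have "pd k (walker_metric r F i j) P = 0" by (metis pd_const)
  then show ?thesis using False by simp
qed

definition walker_inverse :: "nat \<Rightarrow> (point \<Rightarrow> real) \<Rightarrow> point \<Rightarrow> real mat" where
  "walker_inverse r F P = mat (2*r+2) (2*r+2)
     (\<lambda>(i, j). of_bool (j = partner r i) - of_bool (i = 2*r+1 \<and> j = 2*r+1) * F P)"

lemma walker_metric_mult_inverse:
  "metric_mat (2*r+2) (walker_metric r F) P * walker_inverse r F P = 1\<^sub>m (2*r+2)"
proof (rule eq_matI)
  fix i j assume "i < dim_row (1\<^sub>m (2*r+2))" "j < dim_col (1\<^sub>m (2*r+2))"
  then have i: "i < 2*r+2" and j: "j < 2*r+2" by auto
  let ?G = "\<lambda>m. of_bool (j = partner r m) - of_bool (m = 2*r+1 \<and> j = 2*r+1) * F P"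
  have "(metric_mat (2*r+2) (walker_metric r F) P * walker_inverse r F P) $$ (i, j)
      = (\<Sum>m<2*r+2. walker_metric r F i m P * ?G m)"
    using i j by (simp add: metric_mat_def walker_inverse_def scalar_prod_def lessThan_atLeast0)
  also have "\<dots> = (\<Sum>m<2*r+2. (if m = partner r i then ?G m else 0)
      + (if m = 2*r then of_bool (i = 2*r) * F P * ?G m else 0))"
  proof (rule sum.cong[OF refl])
    fix m assume "m \<in> {..<2*r+2}"
    then have m: "m < 2*r+2" by simp
    show "walker_metric r F i m P * ?G m = (if m = partner r i then ?G m else 0)
      + (if m = 2*r then of_bool (i = 2*r) * F P * ?G m else 0)"
      unfolding walker_metric_partner[OF i m] by simp
  qed
  also have "\<dots> = ?G (partner r i) + of_bool (i = 2*r) * F P * ?G (2*r)"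
    using partner_lt[OF i] by (simp only: sum.distrib sum.delta finite_lessThan lessThan_iff) simp
  also have "\<dots> = 1\<^sub>m (2*r+2) $$ (i, j)"
    using i j partner_eq_y_iff[OF i] by (simp add: partner_partner)
  finally show "(metric_mat (2*r+2) (walker_metric r F) P * walker_inverse r F P) $$ (i, j)
      = 1\<^sub>m (2*r+2) $$ (i, j)" .
qed (auto simp: metric_mat_def walker_inverse_def)

lemma inv_metric_walker_metric:
  assumes "l < 2*r+2" "m < 2*r+2"
  shows "inv_metric (2*r+2) (walker_metric r F) l m P
     = of_bool (m = partner r l) - of_bool (l = 2*r+1 \<and> m = 2*r+1) * F P"
proof -
  have "walker_inverse r F P \<in> carrier_mat (2*r+2) (2*r+2)" by (simp add: walker_inverse_def)
  then have "inv_metric (2*r+2) (walker_metric r F) l m P = walker_inverse r F P $$ (l, m)"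
    by (rule inv_metric_eqI[OF _ walker_metric_mult_inverse])
  also have "\<dots> = of_bool (m = partner r l) - of_bool (l = 2*r+1 \<and> m = 2*r+1) * F P"
    unfolding walker_inverse_def using assms by (subst index_mat) auto
  finally show ?thesis .
qed

lemma gform_walker_metric:
  assumes "v \<in> carrier_vec (2*r+2)"
  shows "gform (2*r+2) (walker_metric r F) P v z =
    (\<Sum>j<2*r+2. z$j * (v$(partner r j) + of_bool (j = 2*r) * F P * v$(2*r)))"
proof -
  have "gform (2*r+2) (walker_metric r F) P v z = (\<Sum>j<2*r+2. \<Sum>i<2*r+2. v$i * z$j * walker_metric r F i j P)"
    unfolding gform_def by (rule sum.swap)
  also have "\<dots> = (\<Sum>j<2*r+2. z$j * (v$(partner r j) + of_bool (j = 2*r) * F P * v$(2*r)))"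
  proof (rule sum.cong[OF refl])
    fix j assume "j \<in> {..<2*r+2}"
    then have j: "j < 2*r+2" by simp
    have "(\<Sum>i<2*r+2. v$i * z$j * walker_metric r F i j P) = (\<Sum>i<2*r+2.
        (if i = partner r j then z$j * v$i else 0) + (if i = 2*r then of_bool (j = 2*r) * z$j * F P * v$i else 0))"
    proof (rule sum.cong[OF refl])
      fix i assume "i \<in> {..<2*r+2}"
      then have i: "i < 2*r+2" by simp
      show "v$i * z$j * walker_metric r F i j P = (if i = partner r j then z$j * v$i else 0)
          + (if i = 2*r then of_bool (j = 2*r) * z$j * F P * v$i else 0)"
        unfolding walker_metric_partner[OF i j] partner_eq_iff[OF i j] by auto
    qed
    also have "\<dots> = z$j * v$(partner r j) + of_bool (j = 2*r) * z$j * F P * v$(2*r)"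
      using partner_lt[OF j]
      by (simp only: sum.distrib sum.delta finite_lessThan lessThan_iff) simp
    finally show "(\<Sum>i<2*r+2. v$i * z$j * walker_metric r F i j P)
        = z$j * (v$(partner r j) + of_bool (j = 2*r) * F P * v$(2*r))"
      by (simp add: algebra_simps)
  qed
  finally show ?thesis .
qed

locale walker =
  fixes r :: nat and F :: "point \<Rightarrow> real"
  assumes pd_x_potential: "pd (2*r) F P = 0"
    and pd_y_potential: "pd (2*r+1) F P = 0"
    and pd_potential_differentiable: "(\<lambda>t. pd a F (P(q := t))) differentiable (at (P q))"
    and hessian_sym: "pd i (pd a F) P = pd a (pd i F) P"
begin

lemma hessian_x [simp]: "pd i (pd (2*r) F) P = 0" "pd (2*r) (pd i F) P = 0"
proof -
  have "pd (2*r) F = (\<lambda>P. 0)" using pd_x_potential by (simp add: fun_eq_iff)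
  then show "pd i (pd (2*r) F) P = 0" by simp
  then show "pd (2*r) (pd i F) P = 0" by (simp add: hessian_sym)
qed

(* Stated with Suc (2*r), the simp normal form of 2*r+1. *)
lemma hessian_y [simp]: "pd i (pd (Suc (2*r)) F) P = 0" "pd (Suc (2*r)) (pd i F) P = 0"
proof -
  have "pd (Suc (2*r)) F = (\<lambda>P. 0)" using pd_y_potential by (simp add: fun_eq_iff)
  then show "pd i (pd (Suc (2*r)) F) P = 0" by simp
  then show "pd (Suc (2*r)) (pd i F) P = 0" by (simp add: hessian_sym)
qed

lemma has_real_derivative_pd_potential:
  "((\<lambda>t. pd a F (P(q := t))) has_real_derivative pd q (pd a F) P) (at (P q))"
  unfolding pd_def[of q "pd a F"]
  by (rule DERIV_deriv_iff_real_differentiable[THEN iffD2, OF pd_potential_differentiable])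

lemma christoffel_walker:
  assumes l: "l < 2*r+2"
  shows "christoffel (2*r+2) (walker_metric r F) l i j P =
    1/2 * (of_bool (j = 2*r \<and> l = 2*r+1) * pd i F P + of_bool (i = 2*r \<and> l = 2*r+1) * pd j F P
      - of_bool (i = 2*r \<and> j = 2*r) * pd (partner r l) F P)"
proof -
  define E where "E m = of_bool (j = 2*r \<and> m = 2*r) * pd i F P
      + of_bool (i = 2*r \<and> m = 2*r) * pd j F P - of_bool (i = 2*r \<and> j = 2*r) * pd m F P" for m
  let ?G = "\<lambda>m. of_bool (m = partner r l) - of_bool (l = 2*r+1 \<and> m = 2*r+1) * F P"
  have "christoffel (2*r+2) (walker_metric r F) l i j P = 1/2 * (\<Sum>m<2*r+2. ?G m * E m)"
    unfolding christoffel_def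
  proof (intro arg_cong[where f="\<lambda>x. 1/2 * x"] sum.cong[OF refl])
    fix m assume "m \<in> {..<2*r+2}"
    then have m: "m < 2*r+2" by simp
    show "inv_metric (2*r+2) (walker_metric r F) l m P * (pd i (walker_metric r F j m) P
        + pd j (walker_metric r F i m) P - pd m (walker_metric r F i j) P) = ?G m * E m"
      unfolding inv_metric_walker_metric[OF l m] pd_walker_metric E_def by (simp add: ac_simps)
  qed
  also have "(\<Sum>m<2*r+2. ?G m * E m) = (\<Sum>m<2*r+2. (if m = partner r l then E m else 0)
      - (if m = 2*r+1 then of_bool (l = 2*r+1) * F P * E m else 0))"
    by (intro sum.cong) (auto simp: algebra_simps)
  also have "\<dots> = E (partner r l) - of_bool (l = 2*r+1) * F P * E (2*r+1)"
    using partner_lt[OF l]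
    by (simp only: sum_subtractf sum.delta finite_lessThan lessThan_iff) simp
  also have "E (2*r+1) = 0"
    using pd_y_potential by (simp add: E_def)
  also have "E (partner r l) = of_bool (j = 2*r \<and> l = 2*r+1) * pd i F P
      + of_bool (i = 2*r \<and> l = 2*r+1) * pd j F P - of_bool (i = 2*r \<and> j = 2*r) * pd (partner r l) F P"
    by (simp only: E_def partner_eq_x_iff[OF l])
  finally show ?thesis by (simp only: mult_zero_right diff_zero)
qed

lemma pd_christoffel_walker:
  assumes l: "l < 2*r+2"
  shows "pd q (christoffel (2*r+2) (walker_metric r F) l i j) P =
    1/2 * (of_bool (j = 2*r \<and> l = 2*r+1) * pd q (pd i F) P
      + of_bool (i = 2*r \<and> l = 2*r+1) * pd q (pd j F) P
      - of_bool (i = 2*r \<and> j = 2*r) * pd q (pd (partner r l) F) P)"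
  unfolding christoffel_walker[OF l]
  by (intro pd_eqI DERIV_cmult DERIV_diff DERIV_add has_real_derivative_pd_potential)

lemma christoffel_product_walker:
  assumes ij: "i \<noteq> j" and l: "l < 2*r+2" and m: "m < 2*r+2"
  shows "christoffel (2*r+2) (walker_metric r F) l j k P
    * christoffel (2*r+2) (walker_metric r F) m i l P = 0"
  unfolding christoffel_walker[OF l] christoffel_walker[OF m]
  using ij partner_eq_x_iff[OF l] pd_x_potential pd_y_potential by auto

lemma riem_up_walker:
  assumes m: "m < 2*r+2"
  shows "riem_up (2*r+2) (walker_metric r F) m i j k P =
    1/2 * (of_bool (j = 2*r \<and> m = 2*r+1) * pd i (pd k F) P
      - of_bool (i = 2*r \<and> m = 2*r+1) * pd j (pd k F) P
      - of_bool (j = 2*r \<and> k = 2*r) * pd i (pd (partner r m) F) P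
      + of_bool (i = 2*r \<and> k = 2*r) * pd j (pd (partner r m) F) P)"
proof -
  let ?\<Gamma> = "christoffel (2*r+2) (walker_metric r F)"
  have "(\<Sum>l<2*r+2. ?\<Gamma> l j k P * ?\<Gamma> m i l P - ?\<Gamma> l i k P * ?\<Gamma> m j l P) = 0"
  proof (cases "i = j")
    case False
    show ?thesis
    proof (intro sum.neutral ballI)
      fix l assume "l \<in> {..<2*r+2}"
      then have l: "l < 2*r+2" by simp
      show "?\<Gamma> l j k P * ?\<Gamma> m i l P - ?\<Gamma> l i k P * ?\<Gamma> m j l P = 0"
        by (simp only: christoffel_product_walker[OF False l m]
            christoffel_product_walker[OF not_sym[OF False] l m] diff_self)
    qed
  qed simp
  then show ?thesis
    unfolding riem_up_def pd_christoffel_walker[OF m]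
    using hessian_sym[of j i P] by (simp add: algebra_simps)
qed

lemma riem_lowered_walker:
  assumes h: "h < 2*r+2"
  shows "(\<Sum>m<2*r+2. riem_up (2*r+2) (walker_metric r F) m i j k P * walker_metric r F m h P) =
    1/2 * (of_bool (j = 2*r \<and> h = 2*r) * pd i (pd k F) P
      - of_bool (i = 2*r \<and> h = 2*r) * pd j (pd k F) P
      - of_bool (j = 2*r \<and> k = 2*r) * pd i (pd h F) P
      + of_bool (i = 2*r \<and> k = 2*r) * pd j (pd h F) P)"
proof -
  let ?R = "\<lambda>m. riem_up (2*r+2) (walker_metric r F) m i j k P"
  have "(\<Sum>m<2*r+2. ?R m * walker_metric r F m h P) = (\<Sum>m<2*r+2.
      (if m = partner r h then ?R m else 0) + (if m = 2*r then of_bool (h = 2*r) * F P * ?R m else 0))"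
  proof (rule sum.cong[OF refl])
    fix m assume "m \<in> {..<2*r+2}"
    then have m: "m < 2*r+2" by simp
    show "?R m * walker_metric r F m h P = (if m = partner r h then ?R m else 0)
      + (if m = 2*r then of_bool (h = 2*r) * F P * ?R m else 0)"
      unfolding walker_metric_partner[OF m h] partner_eq_iff[OF m h] by auto
  qed
  also have "\<dots> = ?R (partner r h) + of_bool (h = 2*r) * F P * ?R (2*r)"
    using partner_lt[OF h]
    by (simp only: sum.distrib sum.delta finite_lessThan lessThan_iff) simp
  also have "?R (2*r) = 0"
    using riem_up_walker[of "2*r" i j k P] by simp
  also have "?R (partner r h) = 1/2 * (of_bool (j = 2*r \<and> h = 2*r) * pd i (pd k F) P
      - of_bool (i = 2*r \<and> h = 2*r) * pd j (pd k F) P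
      - of_bool (j = 2*r \<and> k = 2*r) * pd i (pd h F) P
      + of_bool (i = 2*r \<and> k = 2*r) * pd j (pd h F) P)"
    unfolding riem_up_walker[OF partner_lt[OF h]] partner_partner[OF h] partner_eq_y_iff[OF h] ..
  finally show ?thesis by (simp only: mult_zero_right add_0_right)
qed

definition hessian_form :: "point \<Rightarrow> real vec \<Rightarrow> real vec \<Rightarrow> real" where
  "hessian_form P u v = (\<Sum>i<2*r+2. \<Sum>k<2*r+2. u$i * v$k * pd i (pd k F) P)"

lemma curv_walker:
  "curv (2*r+2) (walker_metric r F) P y a b z =
    1/2 * (a$(2*r) * z$(2*r) * hessian_form P y b - y$(2*r) * z$(2*r) * hessian_form P a b
      - a$(2*r) * b$(2*r) * hessian_form P y z + y$(2*r) * b$(2*r) * hessian_form P a z)"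
proof -
  let ?R = "\<lambda>i j k h. 1/2 * (of_bool (j = 2*r \<and> h = 2*r) * pd i (pd k F) P
      - of_bool (i = 2*r \<and> h = 2*r) * pd j (pd k F) P
      - of_bool (j = 2*r \<and> k = 2*r) * pd i (pd h F) P
      + of_bool (i = 2*r \<and> k = 2*r) * pd j (pd h F) P)"
  have "curv (2*r+2) (walker_metric r F) P y a b z =
    (\<Sum>i<2*r+2. \<Sum>j<2*r+2. \<Sum>k<2*r+2. \<Sum>h<2*r+2. y$i * a$j * b$k * z$h * ?R i j k h)"
    unfolding curv_def
  proof (intro sum.cong refl)
    fix i j k h assume "h \<in> {..<2*r+2}"
    then have h: "h < 2*r+2" by simp
    show "(\<Sum>m<2*r+2. y$i * a$j * b$k * z$h * riem_up (2*r+2) (walker_metric r F) m i j k P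
        * walker_metric r F m h P) = y$i * a$j * b$k * z$h * ?R i j k h"
      unfolding riem_lowered_walker[OF h, symmetric] sum_distrib_left by (simp only: mult.assoc)
  qed
  also have "\<dots> = 1/2 * (a$(2*r) * z$(2*r) * hessian_form P y b - y$(2*r) * z$(2*r) * hessian_form P a b
      - a$(2*r) * b$(2*r) * hessian_form P y z + y$(2*r) * b$(2*r) * hessian_form P a z)"
  proof -
    have of_bool_conj: "of_bool (A \<and> B) * c = (if B then if A then c else 0 else 0)" for A B and c :: real
      by simp
    have sum_if: "(\<Sum>x\<in>S. if c then f x else 0) = (if c then (\<Sum>x\<in>S. f x) else 0)"
      for S c and f :: "nat \<Rightarrow> real"
      by simp
    show ?thesis
      unfolding of_bool_conj hessian_form_def
      by (simp add: if_distrib[where f="\<lambda>x. _ * x"] sum.delta sum_distrib_left sum_if ac_simps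
        right_diff_distrib distrib_left sum.distrib sum_subtractf sum_negf cong: if_cong)
  qed
  finally show ?thesis .
qed

definition hessian_apply :: "point \<Rightarrow> real vec \<Rightarrow> nat \<Rightarrow> real" where
  "hessian_apply P u a = (\<Sum>i<2*r+2. u$i * pd i (pd a F) P)"

lemma hessian_apply_xy [simp]:
  "hessian_apply P u (2*r) = 0" "hessian_apply P u (Suc (2*r)) = 0"
  by (simp_all add: hessian_apply_def)

lemma hessian_form_apply_right: "hessian_form P u v = (\<Sum>k<2*r+2. v$k * hessian_apply P u k)"
  unfolding hessian_form_def hessian_apply_def sum_distrib_left
  by (subst sum.swap) (simp add: ac_simps)

lemma hessian_form_apply_left: "hessian_form P u v = (\<Sum>i<2*r+2. u$i * hessian_apply P v i)"
  unfolding hessian_form_def hessian_apply_def sum_distrib_left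
  by (simp add: ac_simps hessian_sym)

(* Column i is J(xi) e_i: with w = xi_x y - y_x xi we have R(y,xi,xi,z) = 1/2 (z_x H(w,xi) - xi_x H(w,z)),
   and the metric pairs coordinate b with partner r b. *)
definition jacobi_matrix :: "point \<Rightarrow> real vec \<Rightarrow> real mat" where
  "jacobi_matrix P \<xi> = mat (2*r+2) (2*r+2) (\<lambda>(b, i).
     if b < 2*r then - 1/2 * \<xi>$(2*r) *
       (\<xi>$(2*r) * pd i (pd (partner r b) F) P - of_bool (i = 2*r) * hessian_apply P \<xi> (partner r b))
     else if b = 2*r then 0
     else 1/2 * (\<xi>$(2*r) * hessian_apply P \<xi> i - of_bool (i = 2*r) * hessian_form P \<xi> \<xi>))"

lemma jacobi_matrix_carrier: "jacobi_matrix P \<xi> \<in> carrier_mat (2*r+2) (2*r+2)"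
  by (simp add: jacobi_matrix_def)

lemma jacobi_matrix_mult_vec_uv:
  assumes "y \<in> carrier_vec (2*r+2)" "b < 2*r"
  shows "(jacobi_matrix P \<xi> *\<^sub>v y)$b = - 1/2 * \<xi>$(2*r) *
    (\<xi>$(2*r) * hessian_apply P y (partner r b) - y$(2*r) * hessian_apply P \<xi> (partner r b))"
  using assms
  by (simp add: jacobi_matrix_def hessian_apply_def scalar_prod_def lessThan_atLeast0 sum_subtractf
      sum_distrib_left sum_negf algebra_simps of_bool_def cong: if_cong)

lemma jacobi_matrix_mult_vec_x:
  "y \<in> carrier_vec (2*r+2) \<Longrightarrow> (jacobi_matrix P \<xi> *\<^sub>v y)$(2*r) = 0"
  by (simp add: jacobi_matrix_def scalar_prod_def)

lemma jacobi_matrix_mult_vec_y: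
  assumes "y \<in> carrier_vec (2*r+2)"
  shows "(jacobi_matrix P \<xi> *\<^sub>v y)$(2*r+1) =
    1/2 * (\<xi>$(2*r) * hessian_form P y \<xi> - y$(2*r) * hessian_form P \<xi> \<xi>)"
  using assms unfolding hessian_form_apply_left[of P y \<xi>]
  by (simp add: jacobi_matrix_def scalar_prod_def lessThan_atLeast0 sum_subtractf
      sum_distrib_left algebra_simps of_bool_def cong: if_cong)

lemma gform_jacobi_matrix:
  assumes y: "y \<in> carrier_vec (2*r+2)"
  shows "gform (2*r+2) (walker_metric r F) P (jacobi_matrix P \<xi> *\<^sub>v y) z
    = curv (2*r+2) (walker_metric r F) P y \<xi> \<xi> z"
proof -
  let ?Jy = "jacobi_matrix P \<xi> *\<^sub>v y"
  have "gform (2*r+2) (walker_metric r F) P ?Jy z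
      = (\<Sum>j<2*r+2. z$j * (?Jy$(partner r j) + of_bool (j = 2*r) * F P * ?Jy$(2*r)))"
    by (rule gform_walker_metric[OF mult_mat_vec_carrier[OF jacobi_matrix_carrier y]])
  also have "\<dots> = (\<Sum>j<2*r+2. - 1/2 * \<xi>$(2*r) *
      (\<xi>$(2*r) * (z$j * hessian_apply P y j) - y$(2*r) * (z$j * hessian_apply P \<xi> j))
      + (if j = 2*r then 1/2 * z$j * (\<xi>$(2*r) * hessian_form P y \<xi> - y$(2*r) * hessian_form P \<xi> \<xi>) else 0))"
  proof (rule sum.cong[OF refl])
    fix j assume "j \<in> {..<2*r+2}"
    then consider "j < 2*r" | "j = 2*r" | "j = 2*r+1" by fastforce
    then show "z$j * (?Jy$(partner r j) + of_bool (j = 2*r) * F P * ?Jy$(2*r)) = - 1/2 * \<xi>$(2*r) *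
      (\<xi>$(2*r) * (z$j * hessian_apply P y j) - y$(2*r) * (z$j * hessian_apply P \<xi> j))
      + (if j = 2*r then 1/2 * z$j * (\<xi>$(2*r) * hessian_form P y \<xi> - y$(2*r) * hessian_form P \<xi> \<xi>) else 0)"
    proof cases
      case 1
      then have "partner r j < 2*r" "partner r (partner r j) = j" by (auto simp: partner_def)
      then show ?thesis
        using 1 by (simp add: jacobi_matrix_mult_vec_uv[OF y] jacobi_matrix_mult_vec_x[OF y] algebra_simps)
    next
      case 2
      then have "z$j * (?Jy$(partner r j) + of_bool (j = 2*r) * F P * ?Jy$(2*r))
          = z$(2*r) * (1/2 * (\<xi>$(2*r) * hessian_form P y \<xi> - y$(2*r) * hessian_form P \<xi> \<xi>))"
        using jacobi_matrix_mult_vec_x[OF y] jacobi_matrix_mult_vec_y[OF y] by simp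
      moreover have "hessian_apply P y j = 0" "hessian_apply P \<xi> j = 0"
        using 2 by simp_all
      ultimately show ?thesis using 2 by (simp add: algebra_simps)
    next
      case 3
      then show ?thesis
        using jacobi_matrix_mult_vec_x[OF y, of P \<xi>] by (simp add: partner_def)
    qed
  qed
  also have "\<dots> = curv (2*r+2) (walker_metric r F) P y \<xi> \<xi> z"
    unfolding curv_walker hessian_form_apply_right[of P _ z]
    by (simp add: sum.distrib sum_distrib_left sum_subtractf algebra_simps)
  finally show ?thesis .
qed

lemma jacobi_walker: "jacobi (2*r+2) (walker_metric r F) P \<xi> = jacobi_matrix P \<xi>"
  by (rule jacobi_eqI[OF _ walker_metric_mult_inverse jacobi_matrix_carrier gform_jacobi_matrix])
    (simp_all add: walker_inverse_def)

end

section \<open>The potential of g3\<close>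

definition g3_potential :: "nat \<Rightarrow> (real \<Rightarrow> real) \<Rightarrow> point \<Rightarrow> real" where
  "g3_potential r \<psi> P = - 2 * (\<Sum>k<r-1. P k * P (r+k+1)) - 2 * \<psi> (P (r-1))"

lemma g3_eq_walker_metric: "g3 r \<psi> = walker_metric r (g3_potential r \<psi>)"
  by (simp add: fun_eq_iff g3_def walker_metric_def g3_potential_def)

definition g3_gradient :: "nat \<Rightarrow> (real \<Rightarrow> real) \<Rightarrow> nat \<Rightarrow> point \<Rightarrow> real" where
  "g3_gradient r \<psi> a P =
    (if a < r-1 then - 2 * P (r+a+1)
     else if a = r-1 then - 2 * deriv \<psi> (P (r-1))
     else if r+1 \<le> a \<and> a < 2*r then - 2 * P (a-r-1)
     else 0)"

definition g3_hessian :: "nat \<Rightarrow> (real \<Rightarrow> real) \<Rightarrow> nat \<Rightarrow> nat \<Rightarrow> point \<Rightarrow> real" where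
  "g3_hessian r \<psi> i a P =
    (if (a < r-1 \<and> i = r+a+1) \<or> (i < r-1 \<and> a = r+i+1) then - 2
     else if a = r-1 \<and> i = r-1 then - 2 * deriv (deriv \<psi>) (P (r-1))
     else 0)"

lemma sum_shifted_delta:
  "(\<Sum>a<(r::nat)-1. if r+a+1 = k then f a else 0) = (if r+1 \<le> k \<and> k < 2*r then f (k-r-1) else (0::real))"
proof -
  have "(\<Sum>a<r-1. if r+a+1 = k then f a else 0)
      = (\<Sum>a<r-1. if a = k-r-1 \<and> r+1 \<le> k then f a else 0)"
    by (rule sum.cong) auto
  also have "\<dots> = (\<Sum>a<r-1. if a = k-r-1 then (if r+1 \<le> k then f a else 0) else 0)"
    by (rule sum.cong) auto
  also have "\<dots> = (if r+1 \<le> k \<and> k < 2*r then f (k-r-1) else 0)"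
    by (subst sum.delta) auto
  finally show ?thesis .
qed

lemma has_real_derivative_g3_potential:
  assumes "\<And>x. \<psi> differentiable at x"
  shows "((\<lambda>t. g3_potential r \<psi> (P(k := t))) has_real_derivative g3_gradient r \<psi> k P) (at (P k))"
proof -
  let ?Q = "\<lambda>t. P(k := t)"
  have "((\<lambda>t. ?Q t a * ?Q t (r+a+1)) has_real_derivative
      (if r+a+1 = k then P a else 0) + (if a = k then P (r+a+1) else 0)) (at (P k))" for a
    by (rule DERIV_cong[OF DERIV_mult'[OF has_real_derivative_fun_upd has_real_derivative_fun_upd]])
      simp
  then have sum: "((\<lambda>t. \<Sum>a<r-1. ?Q t a * ?Q t (r+a+1)) has_real_derivative
      (\<Sum>a<r-1. (if r+a+1 = k then P a else 0) + (if a = k then P (r+a+1) else 0))) (at (P k))"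
    by (rule DERIV_sum)
  have sum_eq: "(\<Sum>a<r-1. (if r+a+1 = k then P a else 0) + (if a = k then P (r+a+1) else 0))
      = (if r+1 \<le> k \<and> k < 2*r then P (k-r-1) else 0) + (if k < r-1 then P (r+k+1) else 0)"
    by (simp only: sum.distrib sum_shifted_delta sum.delta finite_lessThan lessThan_iff)
  have psi: "((\<lambda>t. \<psi> (?Q t (r-1))) has_real_derivative
      of_bool (k = r-1) * deriv \<psi> (P k)) (at (P k))"
    using assms DERIV_deriv_iff_real_differentiable by (cases "k = r-1") auto
  have "((\<lambda>t. g3_potential r \<psi> (?Q t)) has_real_derivative
      - 2 * ((if r+1 \<le> k \<and> k < 2*r then P (k-r-1) else 0) + (if k < r-1 then P (r+k+1) else 0))
      - 2 * (of_bool (k = r-1) * deriv \<psi> (P k))) (at (P k))"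
    unfolding g3_potential_def by (rule DERIV_diff[OF DERIV_cmult[OF sum[unfolded sum_eq]] DERIV_cmult[OF psi]])
  then show ?thesis
    by (rule DERIV_cong) (auto simp: g3_gradient_def)
qed

lemma has_real_derivative_g3_gradient:
  assumes "\<And>x. deriv \<psi> differentiable at x"
  shows "((\<lambda>t. g3_gradient r \<psi> a (P(i := t))) has_real_derivative g3_hessian r \<psi> i a P) (at (P i))"
proof -
  consider "a < r-1" | "a = r-1" | "r+1 \<le> a \<and> a < 2*r" | "\<not> a < r-1" "a \<noteq> r-1" "\<not> (r+1 \<le> a \<and> a < 2*r)"
    by blast
  then show ?thesis
  proof cases
    case 1
    have "(\<lambda>t. g3_gradient r \<psi> a (P(i := t))) = (\<lambda>t. - 2 * (P(i := t)) (r+a+1))"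
      using 1 by (simp add: g3_gradient_def)
    moreover have "g3_hessian r \<psi> i a P = - 2 * of_bool (r+a+1 = i)"
      using 1 by (auto simp: g3_hessian_def)
    ultimately show ?thesis
      by (simp only:) (rule DERIV_cmult[OF has_real_derivative_fun_upd])
  next
    case 2
    have "\<not> r+1 \<le> r-1" by arith
    then have grad: "(\<lambda>t. g3_gradient r \<psi> a (P(i := t))) = (\<lambda>t. - 2 * deriv \<psi> ((P(i := t)) (r-1)))"
      using 2 by (simp add: g3_gradient_def)
    show ?thesis
    proof (cases "i = r-1")
      case True
      have "((\<lambda>t. - 2 * deriv \<psi> t) has_real_derivative - 2 * deriv (deriv \<psi>) (P i)) (at (P i))"
        using assms DERIV_deriv_iff_real_differentiable by (intro DERIV_cmult) blast
      then show ?thesis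
        unfolding grad using 2 True \<open>\<not> r+1 \<le> r-1\<close> by (simp add: g3_hessian_def)
    next
      case False
      then show ?thesis
        unfolding grad using 2 \<open>\<not> r+1 \<le> r-1\<close> by (simp add: g3_hessian_def)
    qed
  next
    case 3
    then have "\<not> a < r-1" "a \<noteq> r-1" by arith+
    then have "(\<lambda>t. g3_gradient r \<psi> a (P(i := t))) = (\<lambda>t. - 2 * (P(i := t)) (a-r-1))"
      using 3 by (simp add: g3_gradient_def)
    moreover have "g3_hessian r \<psi> i a P = - 2 * of_bool (a-r-1 = i)"
      using 3 by (auto simp: g3_hessian_def)
    ultimately show ?thesis
      by (simp only:) (rule DERIV_cmult[OF has_real_derivative_fun_upd])
  next
    case 4
    then have "(\<lambda>t. g3_gradient r \<psi> a (P(i := t))) = (\<lambda>t. 0)" "g3_hessian r \<psi> i a P = 0"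
      by (auto simp: g3_gradient_def g3_hessian_def)
    then show ?thesis by simp
  qed
qed

lemma g3_hessian_sym: "g3_hessian r \<psi> i a P = g3_hessian r \<psi> a i P"
  unfolding g3_hessian_def by (simp add: disj_commute conj_commute)

section \<open>Nilpotency of the Jacobi operator\<close>

(* Position of a coordinate in the chain u_1, ..., u_r, v_r, ..., v_1 along which the Hessian of
   g3_potential shifts; an involution of {..<2*r}. *)
definition chain_pos :: "nat \<Rightarrow> nat \<Rightarrow> nat" where
  "chain_pos r i = (if i < r then i else 3*r - 1 - i)"

lemma chain_pos_lt: "i < 2*r \<Longrightarrow> chain_pos r i < 2*r"
  by (auto simp: chain_pos_def)

lemma chain_pos_chain_pos: "i < 2*r \<Longrightarrow> chain_pos r (chain_pos r i) = i"
  by (auto simp: chain_pos_def)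

lemma g3_hessian_partner_nonzero:
  assumes "b < 2*r" "g3_hessian r \<psi> i (partner r b) P \<noteq> 0"
  shows "i < 2*r \<and> chain_pos r b = Suc (chain_pos r i)"
  using assms by (auto simp: g3_hessian_def partner_def chain_pos_def split: if_splits)

lemma g3_hessian_chain_step:
  assumes "Suc k < 2*r" "deriv (deriv \<psi>) (P (r-1)) \<noteq> 0"
  shows "g3_hessian r \<psi> (chain_pos r k) (partner r (chain_pos r (Suc k))) P \<noteq> 0"
  using assms by (auto simp: g3_hessian_def partner_def chain_pos_def)

definition chain_vanishes_below :: "nat \<Rightarrow> nat \<Rightarrow> real vec \<Rightarrow> bool" where
  "chain_vanishes_below r q y \<longleftrightarrow> y$(2*r) = 0 \<and> (\<forall>i<2*r. chain_pos r i < q \<longrightarrow> y$i = 0)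
     \<and> (2*r \<le> q \<longrightarrow> y$(2*r+1) = 0)"

lemma chain_vanishes_below_eq_0:
  assumes "y \<in> carrier_vec (2*r+2)" "chain_vanishes_below r (2*r) y"
  shows "y = 0\<^sub>v (2*r+2)"
proof (rule eq_vecI)
  fix i assume "i < dim_vec (0\<^sub>v (2*r+2) :: real vec)"
  then consider "i < 2*r" | "i = 2*r" | "i = 2*r+1" by fastforce
  then show "y$i = 0\<^sub>v (2*r+2) $ i"
    by cases (use assms chain_pos_lt in \<open>auto simp: chain_vanishes_below_def\<close>)
qed (use assms in simp)

locale g3_jacobi =
  fixes r :: nat and \<psi> :: "real \<Rightarrow> real"
  assumes r_pos: "r \<ge> 1"
    and differentiable_psi: "\<And>x. \<psi> differentiable at x"
    and differentiable_deriv_psi: "\<And>x. deriv \<psi> differentiable at x"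
begin

lemma pd_g3_potential: "pd a (g3_potential r \<psi>) = g3_gradient r \<psi> a"
proof
  fix P
  show "pd a (g3_potential r \<psi>) P = g3_gradient r \<psi> a P"
    by (rule pd_eqI) (rule has_real_derivative_g3_potential[OF differentiable_psi])
qed

lemma pd_pd_g3_potential [simp]: "pd i (pd a (g3_potential r \<psi>)) P = g3_hessian r \<psi> i a P"
  unfolding pd_g3_potential by (rule pd_eqI) (rule has_real_derivative_g3_gradient[OF differentiable_deriv_psi])

sublocale walker r "g3_potential r \<psi>"
proof
  show "pd (2*r) (g3_potential r \<psi>) P = 0" "pd (2*r+1) (g3_potential r \<psi>) P = 0" for P
    using r_pos by (auto simp: pd_g3_potential g3_gradient_def)
  show "(\<lambda>t. pd a (g3_potential r \<psi>) (P(q := t))) differentiable at (P q)" for a P q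
    unfolding pd_g3_potential real_differentiable_def
    using has_real_derivative_g3_gradient[OF differentiable_deriv_psi] by blast
  show "pd i (pd a (g3_potential r \<psi>)) P = pd a (pd i (g3_potential r \<psi>)) P" for i a P
    by (simp add: g3_hessian_sym)
qed

lemma hessian_apply_partner_eq_0:
  assumes "b < 2*r" "chain_pos r b \<le> q" "\<And>i. i < 2*r \<Longrightarrow> chain_pos r i < q \<Longrightarrow> y$i = 0"
  shows "hessian_apply P y (partner r b) = 0"
  unfolding hessian_apply_def
proof (rule sum.neutral, rule ballI)
  fix i assume "i \<in> {..<2*r+2}"
  show "y$i * pd i (pd (partner r b) (g3_potential r \<psi>)) P = 0"
  proof (cases "g3_hessian r \<psi> i (partner r b) P = 0")
    case False
    then show ?thesis
      using g3_hessian_partner_nonzero[OF assms(1) False] assms(2,3) by simp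
  qed simp
qed

lemma chain_vanishes_below_jacobi_one:
  assumes "y \<in> carrier_vec (2*r+2)"
  shows "chain_vanishes_below r 1 (jacobi_matrix P \<xi> *\<^sub>v y)"
  using r_pos hessian_apply_partner_eq_0[of _ 0]
  by (simp add: chain_vanishes_below_def jacobi_matrix_mult_vec_x[OF assms] jacobi_matrix_mult_vec_uv[OF assms])

lemma chain_vanishes_below_jacobi_Suc:
  assumes y: "y \<in> carrier_vec (2*r+2)" and vanish: "chain_vanishes_below r q y"
  shows "chain_vanishes_below r (Suc q) (jacobi_matrix P \<xi> *\<^sub>v y)"
proof -
  have y_x: "y$(2*r) = 0" and y_chain: "\<And>i. i < 2*r \<Longrightarrow> chain_pos r i < q \<Longrightarrow> y$i = 0"
    using vanish by (auto simp: chain_vanishes_below_def)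
  have "hessian_apply P y k = 0" if "2*r - 1 \<le> q" "k < 2*r+2" for k
  proof (cases "k < 2*r")
    case True
    then have "partner r k < 2*r" "partner r (partner r k) = k" by (auto simp: partner_def)
    moreover have "chain_pos r (partner r k) \<le> q"
      using chain_pos_lt[OF \<open>partner r k < 2*r\<close>] that(1) by linarith
    ultimately show ?thesis
      using hessian_apply_partner_eq_0[of "partner r k" q y P] y_chain by simp
  next
    case False
    then have "k = 2*r \<or> k = Suc (2*r)" using that(2) by linarith
    then show ?thesis by auto
  qed
  then have "(jacobi_matrix P \<xi> *\<^sub>v y)$(2*r+1) = 0" if "2*r \<le> Suc q"
    unfolding jacobi_matrix_mult_vec_y[OF y] hessian_form_apply_right using that y_x
    by (simp add: sum.neutral)
  moreover have "(jacobi_matrix P \<xi> *\<^sub>v y)$b = 0" if "b < 2*r" "chain_pos r b < Suc q" for b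
    unfolding jacobi_matrix_mult_vec_uv[OF y that(1)]
    using hessian_apply_partner_eq_0[of b q y P] that y_chain y_x by simp
  ultimately show ?thesis
    unfolding chain_vanishes_below_def by (simp add: jacobi_matrix_mult_vec_x[OF y])
qed

lemma chain_vanishes_below_jacobi_pow:
  assumes "y \<in> carrier_vec (2*r+2)" "chain_vanishes_below r q y"
  shows "chain_vanishes_below r (q + k) (jacobi_matrix P \<xi> ^\<^sub>m k *\<^sub>v y)"
  using assms
proof (induction k arbitrary: q y)
  case 0
  then show ?case by (simp add: jacobi_matrix_def)
next
  case (Suc k)
  have "jacobi_matrix P \<xi> ^\<^sub>m Suc k *\<^sub>v y = jacobi_matrix P \<xi> ^\<^sub>m k *\<^sub>v (jacobi_matrix P \<xi> *\<^sub>v y)"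
    by (rule pow_mat_Suc_mult_vec[OF jacobi_matrix_carrier Suc.prems(1)])
  moreover have "chain_vanishes_below r (Suc q + k) (jacobi_matrix P \<xi> ^\<^sub>m k *\<^sub>v (jacobi_matrix P \<xi> *\<^sub>v y))"
    using Suc.IH[OF mult_mat_vec_carrier[OF jacobi_matrix_carrier Suc.prems(1)]]
      chain_vanishes_below_jacobi_Suc[OF Suc.prems] by blast
  ultimately show ?case by simp
qed

lemma jacobi_matrix_nilpotent: "jacobi_matrix P \<xi> ^\<^sub>m (2*r) = 0\<^sub>m (2*r+2) (2*r+2)"
proof (rule mat_eq_by_mult_vecI[where n="2*r+2"])
  fix y :: "real vec" assume y: "y \<in> carrier_vec (2*r+2)"
  let ?J = "jacobi_matrix P \<xi>"
  have "?J ^\<^sub>m (2*r) *\<^sub>v y = ?J ^\<^sub>m (2*r - 1) *\<^sub>v (?J *\<^sub>v y)"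
    using pow_mat_Suc_mult_vec[OF jacobi_matrix_carrier[of P \<xi>] y, of "2*r - 1"] r_pos by simp
  also have "\<dots> = 0\<^sub>v (2*r+2)"
  proof (rule chain_vanishes_below_eq_0)
    show "?J ^\<^sub>m (2*r - 1) *\<^sub>v (?J *\<^sub>v y) \<in> carrier_vec (2*r+2)"
      using jacobi_matrix_carrier y by (meson mult_mat_vec_carrier pow_carrier_mat)
    show "chain_vanishes_below r (2*r) (?J ^\<^sub>m (2*r - 1) *\<^sub>v (?J *\<^sub>v y))"
      using chain_vanishes_below_jacobi_pow[where P=P and \<xi>=\<xi> and k="2*r - 1",
          OF mult_mat_vec_carrier[OF jacobi_matrix_carrier y] chain_vanishes_below_jacobi_one[OF y]] r_pos
      by simp
  qed
  also have "\<dots> = 0\<^sub>m (2*r+2) (2*r+2) *\<^sub>v y"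
    using y by (intro eq_vecI) (auto simp: scalar_prod_def)
  finally show "?J ^\<^sub>m (2*r) *\<^sub>v y = 0\<^sub>m (2*r+2) (2*r+2) *\<^sub>v y" .
qed (use jacobi_matrix_carrier in auto)

lemma hessian_apply_unit_vec: "a < 2*r+2 \<Longrightarrow> hessian_apply P (unit_vec (2*r+2) a) c = g3_hessian r \<psi> a c P"
  by (simp add: hessian_apply_def if_distrib[where f="\<lambda>x. x * _"] cong: if_cong)

lemma jacobi_matrix_chain_step:
  assumes k: "Suc k < 2*r" and psi: "deriv (deriv \<psi>) (P (r-1)) \<noteq> 0"
  shows "\<exists>c. c \<noteq> 0 \<and> jacobi_matrix P (unit_vec (2*r+2) (2*r)) *\<^sub>v unit_vec (2*r+2) (chain_pos r k)
    = c \<cdot>\<^sub>v unit_vec (2*r+2) (chain_pos r (Suc k))"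
proof (intro exI conjI)
  let ?a = "chain_pos r k" and ?b = "chain_pos r (Suc k)"
  let ?c = "- 1/2 * g3_hessian r \<psi> ?a (partner r ?b) P"
  have a: "?a < 2*r" and b: "?b < 2*r" using k chain_pos_lt by simp_all
  show "?c \<noteq> 0" using g3_hessian_chain_step[where P=P, OF k psi] by simp
  let ?e = "unit_vec (2*r+2) ?a :: real vec"
  have e: "?e \<in> carrier_vec (2*r+2)" by simp
  show "jacobi_matrix P (unit_vec (2*r+2) (2*r)) *\<^sub>v ?e = ?c \<cdot>\<^sub>v unit_vec (2*r+2) ?b"
  proof (rule eq_vecI)
    fix j assume "j < dim_vec (?c \<cdot>\<^sub>v unit_vec (2*r+2) ?b)"
    then consider "j < 2*r" | "j = 2*r" | "j = 2*r+1" by fastforce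
    then show "(jacobi_matrix P (unit_vec (2*r+2) (2*r)) *\<^sub>v ?e) $ j = (?c \<cdot>\<^sub>v unit_vec (2*r+2) ?b) $ j"
    proof cases
      case 1
      have "g3_hessian r \<psi> ?a (partner r j) P = 0" if "j \<noteq> ?b"
      proof (rule ccontr)
        assume "g3_hessian r \<psi> ?a (partner r j) P \<noteq> 0"
        then have "chain_pos r j = Suc k"
          using g3_hessian_partner_nonzero[OF 1] chain_pos_chain_pos[of k r] k by auto
        then have "j = ?b" using chain_pos_chain_pos[OF 1] by simp
        with that show False ..
      qed
      moreover have "(jacobi_matrix P (unit_vec (2*r+2) (2*r)) *\<^sub>v ?e) $ j
          = - 1/2 * g3_hessian r \<psi> ?a (partner r j) P"
        using jacobi_matrix_mult_vec_uv[OF e 1, of P "unit_vec (2*r+2) (2*r)"]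
          hessian_apply_unit_vec[of ?a P] a 1 by simp
      ultimately show ?thesis using 1 b by auto
    next
      case 2
      then show ?thesis
        using b jacobi_matrix_mult_vec_x[OF e, of P "unit_vec (2*r+2) (2*r)"] by simp
    next
      case 3
      have "hessian_form P ?e (unit_vec (2*r+2) (2*r)) = 0"
        unfolding hessian_form_apply_right by (simp add: if_distrib[where f="\<lambda>x. x * _"] cong: if_cong)
      then show ?thesis using 3 b a jacobi_matrix_mult_vec_y[OF e, of P "unit_vec (2*r+2) (2*r)"] by simp
    qed
  qed (simp add: jacobi_matrix_def)
qed

lemma jacobi_matrix_chain_pow:
  assumes "k + m < 2*r" and psi: "deriv (deriv \<psi>) (P (r-1)) \<noteq> 0"
  shows "\<exists>c. c \<noteq> 0 \<and> jacobi_matrix P (unit_vec (2*r+2) (2*r)) ^\<^sub>m m *\<^sub>v unit_vec (2*r+2) (chain_pos r k)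
    = c \<cdot>\<^sub>v unit_vec (2*r+2) (chain_pos r (k + m))"
  using assms(1)
proof (induction m arbitrary: k)
  case 0
  then show ?case by (intro exI[of _ 1]) (simp add: jacobi_matrix_def)
next
  case (Suc m)
  let ?J = "jacobi_matrix P (unit_vec (2*r+2) (2*r))"
  have k: "Suc k < 2*r" and km: "Suc k + m < 2*r" using Suc.prems by simp_all
  obtain c where c: "c \<noteq> 0" and step: "?J *\<^sub>v unit_vec (2*r+2) (chain_pos r k)
      = c \<cdot>\<^sub>v unit_vec (2*r+2) (chain_pos r (Suc k))"
    using jacobi_matrix_chain_step[where P=P, OF k psi] by blast
  obtain d where d: "d \<noteq> 0" and pow: "?J ^\<^sub>m m *\<^sub>v unit_vec (2*r+2) (chain_pos r (Suc k))
      = d \<cdot>\<^sub>v unit_vec (2*r+2) (chain_pos r (Suc k + m))"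
    using Suc.IH[OF km] by blast
  have "?J ^\<^sub>m Suc m *\<^sub>v unit_vec (2*r+2) (chain_pos r k)
      = ?J ^\<^sub>m m *\<^sub>v (c \<cdot>\<^sub>v unit_vec (2*r+2) (chain_pos r (Suc k)))"
    using pow_mat_Suc_mult_vec[OF jacobi_matrix_carrier unit_vec_carrier] step by simp
  also have "\<dots> = c \<cdot>\<^sub>v (?J ^\<^sub>m m *\<^sub>v unit_vec (2*r+2) (chain_pos r (Suc k)))"
    by (rule mult_mat_vec[OF pow_carrier_mat[OF jacobi_matrix_carrier] unit_vec_carrier])
  also have "\<dots> = (c * d) \<cdot>\<^sub>v unit_vec (2*r+2) (chain_pos r (k + Suc m))"
    unfolding pow by (simp add: smult_smult_assoc)
  finally show ?case using c d by (intro exI[of _ "c * d"]) simp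
qed

lemma jacobi_matrix_pow_nonzero:
  assumes psi: "deriv (deriv \<psi>) (P (r-1)) \<noteq> 0"
  shows "jacobi_matrix P (unit_vec (2*r+2) (2*r)) ^\<^sub>m (2*r-1) \<noteq> 0\<^sub>m (2*r+2) (2*r+2)"
proof
  let ?J = "jacobi_matrix P (unit_vec (2*r+2) (2*r))"
  assume zero: "?J ^\<^sub>m (2*r-1) = 0\<^sub>m (2*r+2) (2*r+2)"
  obtain c where c: "c \<noteq> 0" and e: "?J ^\<^sub>m (2*r-1) *\<^sub>v unit_vec (2*r+2) (chain_pos r 0)
      = c \<cdot>\<^sub>v unit_vec (2*r+2) (chain_pos r (2*r-1))"
    using jacobi_matrix_chain_pow[where P=P and k=0 and m="2*r-1", OF _ psi] r_pos by auto
  have i: "chain_pos r (2*r-1) < 2*r+2" using chain_pos_lt[of "2*r-1" r] r_pos by simp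
  have "(?J ^\<^sub>m (2*r-1) *\<^sub>v unit_vec (2*r+2) (chain_pos r 0)) $ chain_pos r (2*r-1) = 0"
    using zero i by (simp add: scalar_prod_def)
  then show False using e c i by simp
qed

end

theorem theorem1p6:
  fixes r :: nat and \<psi> :: "real \<Rightarrow> real"
  assumes "r \<ge> 2"
    and "\<forall>k x. ((deriv ^^ k) \<psi>) differentiable (at x)"
    and "\<forall>x. deriv (deriv \<psi>) x > 0"
  shows "(\<forall>P. \<forall>\<xi> \<in> carrier_vec (2*r+2).
            jacobi (2*r+2) (g3 r \<psi>) P \<xi> ^\<^sub>m (2*r) = 0\<^sub>m (2*r+2) (2*r+2))
       \<and> (\<exists>P0. \<exists>\<xi>0 \<in> carrier_vec (2*r+2).
            jacobi (2*r+2) (g3 r \<psi>) P0 \<xi>0 ^\<^sub>m (2*r-1) \<noteq> 0\<^sub>m (2*r+2) (2*r+2))"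
proof -
  interpret g3_jacobi r \<psi>
  proof
    show "r \<ge> 1" using assms(1) by simp
    show "\<psi> differentiable at x" for x using assms(2)[rule_format, of 0 x] by simp
    show "deriv \<psi> differentiable at x" for x using assms(2)[rule_format, of 1 x] by simp
  qed
  have jacobi_g3: "jacobi (2*r+2) (g3 r \<psi>) P \<xi> = jacobi_matrix P \<xi>" for P \<xi>
    unfolding g3_eq_walker_metric by (rule jacobi_walker)
  have "jacobi_matrix (\<lambda>_. 0) (unit_vec (2*r+2) (2*r)) ^\<^sub>m (2*r-1) \<noteq> 0\<^sub>m (2*r+2) (2*r+2)"
    using assms(3) by (intro jacobi_matrix_pow_nonzero) (metis less_irrefl)
  then show ?thesis
    unfolding jacobi_g3 using jacobi_matrix_nilpotent unit_vec_carrier by blast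
qed

end
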